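(* As operators on symmetric functions, $$[D(\alpha),E_2] =(\alpha-1)\sum_{i\geq1}(i-1)^2p_i\frac{\partial}{\partial p_{i-1}}+ \sum_{i,j\geq1}(i+j-1)p_ip_j\frac{\partial}{\partial p_{i+j-1}}+\alpha\sum_{i,j\geq1}ij\,p_{i+j+1}\frac{\partial}{\partial p_{i}}\frac{\partial}{\partial p_{j}},$$ where the $i=1$ term of the first sum is zero.
   Context: Symmetric functions are written in power sums $p_k$ in variables $x=(x_1,x_2,\dots)$. $D(\alpha) = \frac{\alpha}{2}\sum_{i}x_i^2\frac{\partial^2}{\partial x_i^2}+\sum_{i}\sum_{j\neq i}\frac{x_ix_j}{x_i-x_j}\frac{\partial}{\partial x_i}$ is the Laplace–Beltrami operator, and $E_2=\sum_{k\ge1}kp_{k+1}\frac{\partial}{\partial p_k}=\sum_i x_i^2\frac{\partial}{\partial x_i}$. $[A,B]=AB-BA$. *)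

theory Defs
  imports "HOL-Analysis.Analysis" "HOL-Library.Poly_Mapping"
begin

text \<open>A symmetric function is a polynomial with real coefficients in the power sums
  p_1, p_2, ...  A monomial is a finitely supported exponent vector m, where
  Poly_Mapping.lookup m k is the exponent of p_k.\<close>

type_synonym symfun = "(nat \<Rightarrow>\<^sub>0 nat) \<Rightarrow>\<^sub>0 real"

definition pvar :: "nat \<Rightarrow> symfun" where
  "pvar k = Poly_Mapping.single (Poly_Mapping.single k 1) 1"

definition dp :: "nat \<Rightarrow> symfun \<Rightarrow> symfun" where
  "dp k F = (\<Sum>mon\<in>Poly_Mapping.keys F. Poly_Mapping.single (mon - Poly_Mapping.single k (1::nat))
                 (Poly_Mapping.lookup F mon * real (Poly_Mapping.lookup mon k)))"

definition pidx :: "symfun \<Rightarrow> nat set" where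
  "pidx F = (\<Union>m\<in>Poly_Mapping.keys F. Poly_Mapping.keys m)"

definition pbound :: "symfun \<Rightarrow> nat" where
  "pbound F = Max (insert 0 (pidx F))"

definition is_symfun :: "symfun \<Rightarrow> bool" where
  "is_symfun F \<longleftrightarrow> 0 \<notin> pidx F"

text \<open>The right-hand side operator.  All sums over i, j \<ge> 1 are truncated at
  pbound F (resp. pbound F + 1), beyond which every term vanishes since the
  corresponding derivative of F is zero.\<close>
definition rhs_op :: "real \<Rightarrow> symfun \<Rightarrow> symfun" where
  "rhs_op \<alpha> F =
     Poly_Mapping.single 0 (\<alpha> - 1) *
       (\<Sum>i\<in>{2..pbound F + 1}. Poly_Mapping.single 0 (real ((i - 1)^2)) * pvar i * dp (i - 1) F)
   + (\<Sum>i\<in>{1..pbound F}. \<Sum>j\<in>{1..pbound F}.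
        Poly_Mapping.single 0 (real (i + j - 1)) * pvar i * pvar j * dp (i + j - 1) F)
   + Poly_Mapping.single 0 \<alpha> *
       (\<Sum>i\<in>{1..pbound F}. \<Sum>j\<in>{1..pbound F}.
        Poly_Mapping.single 0 (real (i * j)) * pvar (i + j + 1) * dp i (dp j F))"

definition psum :: "nat \<Rightarrow> nat \<Rightarrow> (nat \<Rightarrow> real) \<Rightarrow> real" where
  "psum n k x = (\<Sum>i<n. x i ^ k)"

definition ev :: "nat \<Rightarrow> symfun \<Rightarrow> (nat \<Rightarrow> real) \<Rightarrow> real" where
  "ev n F x = (\<Sum>m\<in>Poly_Mapping.keys F. Poly_Mapping.lookup F m * (\<Prod>k\<in>Poly_Mapping.keys m. psum n k x ^ Poly_Mapping.lookup m k))"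

definition pd :: "nat \<Rightarrow> ((nat \<Rightarrow> real) \<Rightarrow> real) \<Rightarrow> (nat \<Rightarrow> real) \<Rightarrow> real" where
  "pd i f x = deriv (\<lambda>t. f (x(i := t))) (x i)"

definition LB :: "real \<Rightarrow> nat \<Rightarrow> ((nat \<Rightarrow> real) \<Rightarrow> real) \<Rightarrow> (nat \<Rightarrow> real) \<Rightarrow> real" where
  "LB \<alpha> n f x = \<alpha> / 2 * (\<Sum>i<n. x i ^ 2 * pd i (pd i f) x)
      + (\<Sum>i<n. \<Sum>j\<in>{..<n} - {i}. x i * x j / (x i - x j) * pd i f x)"

definition E2 :: "nat \<Rightarrow> ((nat \<Rightarrow> real) \<Rightarrow> real) \<Rightarrow> (nat \<Rightarrow> real) \<Rightarrow> real" where
  "E2 n f x = (\<Sum>i<n. x i ^ 2 * pd i f x)"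

end

theory Submission
  imports Defs
begin

(* By the chain rule, d/dx_i (ev G) = sum_k k x_i^(k-1) ev (dG/dp_k).  Hence E_2 acts on polynomials
   in the power sums as  sum_k k p_(k+1) d/dp_k,  and the second-order part of D(alpha) as
   alpha/2 (sum_k k(k-1) p_k d/dp_k + sum_(k,l) k l p_(k+l) d/dp_k d/dp_l).  At points with distinct
   coordinates the first-order part symmetrises, via
   x^(k+1) y - y^(k+1) x = (x - y) sum_(a=1..k) x^a y^(k+1-a),  into
   sum_k k (1/2 sum_(0<a<k) p_a p_(k-a) - (k-1)/2 p_k) d/dp_k.
   So both operators become differential operators in the p_k (all sums truncated beyond the largest
   index occurring), and their commutator follows from the Leibniz rule and reindexing of the sums. *)

abbreviation symconst :: "real \<Rightarrow> symfun" where
  "symconst c \<equiv> Poly_Mapping.single 0 c"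

abbreviation pmon :: "nat \<Rightarrow> (nat \<Rightarrow>\<^sub>0 nat)" where
  "pmon k \<equiv> Poly_Mapping.single k 1"

lemma power2_mult_second_deriv_power:
  "(z::real) ^ 2 * (real k * (real (k - 1) * z ^ (k - 1 - 1)) * g) = real k * real (k - 1) * z ^ k * g"
proof (cases "k \<ge> 2")
  case True
  then obtain j where "k = Suc (Suc j)"
    by (metis add_2_eq_Suc le_Suc_ex)
  then show ?thesis
    by (simp add: power2_eq_square mult_ac)
next
  case False
  then have "k = 0 \<or> k = 1" by auto
  then show ?thesis by auto
qed

lemma power2_mult_deriv_power_product:
  assumes "1 \<le> k" "1 \<le> l"
  shows "(z::real) ^ 2 * (real l * z ^ (l - 1) * g * (real k * z ^ (k - 1))) = real k * real l * z ^ (k + l) * g"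
proof -
  obtain a b where "k = Suc a" "l = Suc b"
    using assms by (metis Suc_le_D One_nat_def)
  then show ?thesis
    by (simp add: power2_eq_square power_add mult_ac)
qed

lemma power_Suc_mult_diff:
  "(x::real) ^ Suc k * y - y ^ Suc k * x = (x - y) * (\<Sum>a\<in>{1..k}. x ^ a * y ^ (Suc k - a))"
proof (induction k)
  case 0
  then show ?case by simp
next
  case (Suc k)
  have "(\<Sum>a\<in>{1..k}. x ^ a * y ^ (Suc (Suc k) - a)) = y * (\<Sum>a\<in>{1..k}. x ^ a * y ^ (Suc k - a))"
    unfolding sum_distrib_left by (intro sum.cong refl) (simp add: Suc_diff_le)
  then have "(\<Sum>a\<in>{1..Suc k}. x ^ a * y ^ (Suc (Suc k) - a))
      = y * (\<Sum>a\<in>{1..k}. x ^ a * y ^ (Suc k - a)) + x ^ Suc k * y"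
    by simp
  also have "(x - y) * \<dots> = y * ((x - y) * (\<Sum>a\<in>{1..k}. x ^ a * y ^ (Suc k - a))) + (x - y) * x ^ Suc k * y"
    by (simp add: algebra_simps)
  also have "\<dots> = y * (x ^ Suc k * y - y ^ Suc k * x) + (x - y) * x ^ Suc k * y"
    by (simp only: Suc.IH)
  also have "\<dots> = x ^ Suc (Suc k) * y - y ^ Suc (Suc k) * x"
    by (simp add: algebra_simps)
  finally show ?case by simp
qed

lemma sum_offdiag_eq:
  fixes f :: "'a \<Rightarrow> 'a \<Rightarrow> 'b::ab_group_add"
  assumes "finite A"
  shows "(\<Sum>i\<in>A. \<Sum>j\<in>A - {i}. f i j) = (\<Sum>i\<in>A. \<Sum>j\<in>A. f i j) - (\<Sum>i\<in>A. f i i)"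
  using assms by (simp add: sum_diff1 sum_subtractf)

lemma sum_offdiag_swap:
  fixes f :: "'a \<Rightarrow> 'a \<Rightarrow> 'b::ab_group_add"
  assumes "finite A"
  shows "(\<Sum>i\<in>A. \<Sum>j\<in>A - {i}. f i j) = (\<Sum>i\<in>A. \<Sum>j\<in>A - {i}. f j i)"
  using sum_offdiag_eq[OF assms, of f] sum_offdiag_eq[OF assms, of "\<lambda>i j. f j i"] sum.swap[of f A A]
  by simp

lemma sum_pred_index:
  fixes h :: "nat \<Rightarrow> 'a::comm_monoid_add"
  assumes "h 0 = 0" and "\<And>j. N < j \<Longrightarrow> h j = 0" and "N < K"
  shows "(\<Sum>k\<in>{1..K}. h (k - 1)) = (\<Sum>j\<in>{1..N}. h j)"
proof -
  have "(\<Sum>k\<in>{1..K}. h (k - 1)) = (\<Sum>k\<in>{Suc 0..Suc (K - 1)}. h (k - 1))"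
    using \<open>N < K\<close> by simp
  also have "\<dots> = (\<Sum>j\<in>{0..K - 1}. h j)"
    by (subst sum.shift_bounds_cl_Suc_ivl) simp
  also have "\<dots> = (\<Sum>j\<in>{1..N}. h j)"
    using assms by (intro sum.mono_neutral_right) (auto simp: not_le)
  finally show ?thesis .
qed

lemma sum_sum_restrict:
  fixes g :: "nat \<Rightarrow> nat \<Rightarrow> 'a::comm_monoid_add"
  assumes "N \<le> K" and "\<And>k l. N < k \<or> N < l \<Longrightarrow> g k l = 0"
  shows "(\<Sum>k\<in>{1..K}. \<Sum>l\<in>{1..K}. g k l) = (\<Sum>k\<in>{1..N}. \<Sum>l\<in>{1..N}. g k l)"
proof -
  have "(\<Sum>k\<in>{1..K}. \<Sum>l\<in>{1..K}. g k l) = (\<Sum>k\<in>{1..N}. \<Sum>l\<in>{1..K}. g k l)"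
    using assms by (intro sum.mono_neutral_right) (auto intro!: sum.neutral)
  also have "\<dots> = (\<Sum>k\<in>{1..N}. \<Sum>l\<in>{1..N}. g k l)"
    using assms by (intro sum.cong refl sum.mono_neutral_right) auto
  finally show ?thesis .
qed

lemma sum_sum_pred_index:
  fixes h :: "nat \<Rightarrow> nat \<Rightarrow> 'a::comm_monoid_add"
  assumes "\<And>l. h 0 l = 0" and "\<And>j l. N < j \<or> N < l \<Longrightarrow> h j l = 0" and "N < K"
  shows "(\<Sum>k\<in>{1..K}. \<Sum>l\<in>{1..K}. h (k - 1) l) = (\<Sum>j\<in>{1..N}. \<Sum>l\<in>{1..N}. h j l)"
proof -
  have "(\<Sum>k\<in>{1..K}. \<Sum>l\<in>{1..K}. h (k - 1) l) = (\<Sum>j\<in>{1..N}. \<Sum>l\<in>{1..K}. h j l)"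
    using assms by (intro sum_pred_index) auto
  also have "\<dots> = (\<Sum>j\<in>{1..N}. \<Sum>l\<in>{1..N}. h j l)"
    using assms by (intro sum.cong refl sum.mono_neutral_right) auto
  finally show ?thesis .
qed

lemma sum_triangle_reindex:
  fixes h :: "nat \<Rightarrow> nat \<Rightarrow> 'a::comm_monoid_add"
  assumes "\<And>i j. 1 \<le> i \<Longrightarrow> N < i + j - 1 \<Longrightarrow> h i j = 0"
  shows "(\<Sum>k\<in>{1..N}. \<Sum>i\<in>{1..k}. h i (k + 1 - i)) = (\<Sum>i\<in>{1..N}. \<Sum>j\<in>{1..N}. h i j)"
proof -
  have "(\<Sum>k\<in>{1..N}. \<Sum>i\<in>{1..k}. h i (k + 1 - i)) = (\<Sum>i\<in>{1..N}. \<Sum>k\<in>{i..N}. h i (k + 1 - i))"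
  proof -
    have "(\<Sum>k\<in>{1..N}. \<Sum>i\<in>{1..k}. h i (k + 1 - i))
        = (\<Sum>k\<in>{1..N}. \<Sum>i\<in>{i. i \<in> {1..N} \<and> i \<le> k}. h i (k + 1 - i))"
      by (intro sum.cong refl) auto
    also have "\<dots> = (\<Sum>i\<in>{1..N}. \<Sum>k\<in>{k. k \<in> {1..N} \<and> i \<le> k}. h i (k + 1 - i))"
      by (rule sum.swap_restrict) auto
    also have "\<dots> = (\<Sum>i\<in>{1..N}. \<Sum>k\<in>{i..N}. h i (k + 1 - i))"
      by (intro sum.cong refl) auto
    finally show ?thesis .
  qed
  also have "\<dots> = (\<Sum>i\<in>{1..N}. \<Sum>j\<in>{1..N}. h i j)"
  proof (rule sum.cong[OF refl])
    fix i assume i: "i \<in> {1..N}"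
    have "(\<Sum>j\<in>{1..N}. h i j) = (\<Sum>j\<in>{1..N}. h i (j + (i - 1) + 1 - i))"
      using i by (intro sum.cong refl) auto
    also have "\<dots> = (\<Sum>k\<in>{1 + (i - 1)..N + (i - 1)}. h i (k + 1 - i))"
      by (rule sum.shift_bounds_cl_nat_ivl[symmetric])
    also have "\<dots> = (\<Sum>k\<in>{i..N}. h i (k + 1 - i))"
      using i assms by (intro sum.mono_neutral_right) auto
    finally show "(\<Sum>k\<in>{i..N}. h i (k + 1 - i)) = (\<Sum>j\<in>{1..N}. h i j)" ..
  qed
  finally show ?thesis .
qed

lemma poly_mapping_eq_sum_single:
  "(F::'a \<Rightarrow>\<^sub>0 'b::comm_monoid_add) = (\<Sum>m\<in>Poly_Mapping.keys F. Poly_Mapping.single m (Poly_Mapping.lookup F m))"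
proof (rule poly_mapping_eqI)
  fix k
  have "Poly_Mapping.lookup (\<Sum>m\<in>Poly_Mapping.keys F. Poly_Mapping.single m (Poly_Mapping.lookup F m)) k
      = (\<Sum>m\<in>Poly_Mapping.keys F. if m = k then Poly_Mapping.lookup F m else 0)"
    by (simp add: lookup_sum lookup_single when_def)
  also have "\<dots> = Poly_Mapping.lookup F k"
    by (simp add: in_keys_iff)
  finally show "Poly_Mapping.lookup F k =
      Poly_Mapping.lookup (\<Sum>m\<in>Poly_Mapping.keys F. Poly_Mapping.single m (Poly_Mapping.lookup F m)) k"
    by simp
qed

lemma mon_eq_iff: "(a::nat \<Rightarrow>\<^sub>0 nat) = b \<longleftrightarrow> (\<forall>k. Poly_Mapping.lookup a k = Poly_Mapping.lookup b k)"
  by (simp add: poly_mapping_eq_iff fun_eq_iff)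

lemma lookup_dp:
  "Poly_Mapping.lookup (dp k F) m = real (Poly_Mapping.lookup m k + 1) * Poly_Mapping.lookup F (m + pmon k)"
proof -
  have shift: "(if mon - pmon k = m then Poly_Mapping.lookup F mon * real (Poly_Mapping.lookup mon k) else 0)
      = (if mon = m + pmon k then Poly_Mapping.lookup F mon * real (Poly_Mapping.lookup m k + 1) else 0)"
    for mon
  proof (cases "mon = m + pmon k")
    case True
    then show ?thesis by (simp add: lookup_add)
  next
    case False
    have "mon - pmon k \<noteq> m" if "Poly_Mapping.lookup mon k \<noteq> 0"
    proof
      assume "mon - pmon k = m"
      with that have "mon = m + pmon k"
        by (auto simp: mon_eq_iff lookup_minus lookup_add lookup_single when_def split: if_splits)
      with False show False by simp
    qed
    with False show ?thesis by auto
  qed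
  have "Poly_Mapping.lookup (dp k F) m = (\<Sum>mon\<in>Poly_Mapping.keys F.
      if mon - pmon k = m then Poly_Mapping.lookup F mon * real (Poly_Mapping.lookup mon k) else 0)"
    by (simp add: dp_def lookup_sum lookup_single when_def)
  also have "\<dots> = real (Poly_Mapping.lookup m k + 1) * Poly_Mapping.lookup F (m + pmon k)"
    unfolding shift by (simp add: in_keys_iff)
  finally show ?thesis .
qed

lemma dp_add: "dp k (F + G) = dp k F + dp k G"
  by (rule poly_mapping_eqI) (simp add: lookup_dp lookup_add algebra_simps)

lemma dp_diff: "dp k (F - G) = dp k F - dp k G"
  by (rule poly_mapping_eqI) (simp add: lookup_dp lookup_minus algebra_simps)

lemma dp_zero [simp]: "dp k 0 = 0"
  by (rule poly_mapping_eqI) (simp add: lookup_dp)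

lemma dp_sum: "dp k (\<Sum>i\<in>S. f i) = (\<Sum>i\<in>S. dp k (f i))"
  by (induction S rule: infinite_finite_induct) (auto simp: dp_add)

lemma dp_single:
  "dp k (Poly_Mapping.single a c) = Poly_Mapping.single (a - pmon k) (c * real (Poly_Mapping.lookup a k))"
  by (cases "c = 0") (simp_all add: dp_def)

lemma dp_commute: "dp k (dp l F) = dp l (dp k F)"
proof (cases "k = l")
  case False
  show ?thesis
  proof (rule poly_mapping_eqI)
    fix m
    have "m + pmon k + pmon l = m + pmon l + pmon k"
      by (simp add: add_ac)
    moreover have "Poly_Mapping.lookup (m + pmon k) l = Poly_Mapping.lookup m l"
      and "Poly_Mapping.lookup (m + pmon l) k = Poly_Mapping.lookup m k"
      using False by (simp_all add: lookup_add lookup_single)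
    ultimately show "Poly_Mapping.lookup (dp k (dp l F)) m = Poly_Mapping.lookup (dp l (dp k F)) m"
      by (simp add: lookup_dp)
  qed
qed simp

lemma dp_mult_single:
  "dp k (Poly_Mapping.single a c * Poly_Mapping.single b d) =
     dp k (Poly_Mapping.single a c) * Poly_Mapping.single b d
   + Poly_Mapping.single a c * dp k (Poly_Mapping.single b d)"
proof -
  have minus_add: "u + v - pmon k = (u - pmon k) + v" if "Poly_Mapping.lookup u k \<noteq> 0"
    for u v :: "nat \<Rightarrow>\<^sub>0 nat"
    using that by (auto simp: mon_eq_iff lookup_minus lookup_add lookup_single when_def)
  consider "Poly_Mapping.lookup a k = 0" "Poly_Mapping.lookup b k = 0"
    | "Poly_Mapping.lookup a k \<noteq> 0" "Poly_Mapping.lookup b k = 0"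
    | "Poly_Mapping.lookup b k \<noteq> 0"
    by blast
  then show ?thesis
  proof cases
    case 1
    then show ?thesis by (simp add: mult_single dp_single lookup_add)
  next
    case 2
    then show ?thesis
      using minus_add[of a b] by (simp add: mult_single dp_single lookup_add add.commute mult_ac)
  next
    case 3
    then show ?thesis
      using minus_add[of b a] minus_add[of a b]
      by (cases "Poly_Mapping.lookup a k = 0")
         (simp_all add: mult_single dp_single lookup_add add.commute single_add[symmetric] algebra_simps)
  qed
qed

lemma dp_mult: "dp k (F * G) = dp k F * G + F * dp k G"
proof -
  define sF where "sF a = Poly_Mapping.single a (Poly_Mapping.lookup F a)" for a
  define sG where "sG b = Poly_Mapping.single b (Poly_Mapping.lookup G b)" for b
  have F: "F = (\<Sum>a\<in>Poly_Mapping.keys F. sF a)" and G: "G = (\<Sum>b\<in>Poly_Mapping.keys G. sG b)"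
    unfolding sF_def sG_def by (rule poly_mapping_eq_sum_single)+
  have "dp k (F * G) = (\<Sum>a\<in>Poly_Mapping.keys F. \<Sum>b\<in>Poly_Mapping.keys G. dp k (sF a * sG b))"
    by (subst F, subst G) (simp add: sum_product dp_sum)
  also have "\<dots> = (\<Sum>a\<in>Poly_Mapping.keys F. \<Sum>b\<in>Poly_Mapping.keys G. dp k (sF a) * sG b + sF a * dp k (sG b))"
    unfolding sF_def sG_def by (simp add: dp_mult_single)
  also have "\<dots> = dp k (\<Sum>a\<in>Poly_Mapping.keys F. sF a) * (\<Sum>b\<in>Poly_Mapping.keys G. sG b)
        + (\<Sum>a\<in>Poly_Mapping.keys F. sF a) * dp k (\<Sum>b\<in>Poly_Mapping.keys G. sG b)"
    by (simp add: dp_sum sum_product sum.distrib)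
  finally show ?thesis
    using F G by simp
qed

lemma dp_symconst [simp]: "dp k (symconst c) = 0"
  by (simp add: dp_single)

lemma dp_of_nat [simp]: "dp k (of_nat m) = 0"
  using dp_symconst[of k "real m"] by (simp del: dp_symconst)

lemma dp_pvar: "dp k (pvar j) = (if j = k then 1 else 0)"
  by (simp add: pvar_def dp_single lookup_single when_def)

definition ev_mon :: "nat \<Rightarrow> (nat \<Rightarrow>\<^sub>0 nat) \<Rightarrow> (nat \<Rightarrow> real) \<Rightarrow> real" where
  "ev_mon n m y = (\<Prod>k\<in>Poly_Mapping.keys m. psum n k y ^ Poly_Mapping.lookup m k)"

lemma ev_mon_superset:
  "finite S \<Longrightarrow> Poly_Mapping.keys m \<subseteq> S \<Longrightarrow> ev_mon n m y = (\<Prod>k\<in>S. psum n k y ^ Poly_Mapping.lookup m k)"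
  unfolding ev_mon_def by (rule prod.mono_neutral_left) (auto simp: in_keys_iff)

lemma ev_mon_add: "ev_mon n (a + b) y = ev_mon n a y * ev_mon n b y"
proof -
  let ?S = "Poly_Mapping.keys a \<union> Poly_Mapping.keys b"
  have "ev_mon n (a + b) y = (\<Prod>k\<in>?S. psum n k y ^ Poly_Mapping.lookup (a + b) k)"
    by (rule ev_mon_superset) (auto dest: keys_add[THEN subsetD])
  also have "\<dots> = (\<Prod>k\<in>?S. psum n k y ^ Poly_Mapping.lookup a k) * (\<Prod>k\<in>?S. psum n k y ^ Poly_Mapping.lookup b k)"
    by (simp add: lookup_add power_add prod.distrib)
  also have "\<dots> = ev_mon n a y * ev_mon n b y"
    by (subst (1 2) ev_mon_superset[of ?S]) auto
  finally show ?thesis .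
qed

lemma ev_mon_zero [simp]: "ev_mon n 0 y = 1"
  by (simp add: ev_mon_def)

lemma ev_superset:
  "finite S \<Longrightarrow> Poly_Mapping.keys F \<subseteq> S \<Longrightarrow> ev n F y = (\<Sum>m\<in>S. Poly_Mapping.lookup F m * ev_mon n m y)"
  unfolding ev_def ev_mon_def[symmetric] by (rule sum.mono_neutral_left) (auto simp: in_keys_iff)

lemma ev_add: "ev n (F + G) y = ev n F y + ev n G y"
proof -
  let ?S = "Poly_Mapping.keys F \<union> Poly_Mapping.keys G"
  have "ev n (F + G) y = (\<Sum>m\<in>?S. Poly_Mapping.lookup (F + G) m * ev_mon n m y)"
    by (rule ev_superset) (auto dest: keys_add[THEN subsetD])
  also have "\<dots> = (\<Sum>m\<in>?S. Poly_Mapping.lookup F m * ev_mon n m y) + (\<Sum>m\<in>?S. Poly_Mapping.lookup G m * ev_mon n m y)"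
    by (simp add: lookup_add algebra_simps sum.distrib)
  also have "\<dots> = ev n F y + ev n G y"
    by (subst (1 2) ev_superset[of ?S]) auto
  finally show ?thesis .
qed

lemma ev_zero [simp]: "ev n 0 y = 0"
  by (simp add: ev_def)

lemma ev_diff: "ev n (F - G) y = ev n F y - ev n G y"
  using ev_add[of n "F - G" G y] by simp

lemma ev_sum: "ev n (\<Sum>i\<in>S. f i) y = (\<Sum>i\<in>S. ev n (f i) y)"
  by (induction S rule: infinite_finite_induct) (auto simp: ev_add)

lemma ev_single: "ev n (Poly_Mapping.single m c) y = c * ev_mon n m y"
  by (cases "c = 0") (simp_all add: ev_def ev_mon_def)

lemma ev_mult: "ev n (F * G) y = ev n F y * ev n G y"
proof -
  define sF where "sF a = Poly_Mapping.single a (Poly_Mapping.lookup F a)" for a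
  define sG where "sG b = Poly_Mapping.single b (Poly_Mapping.lookup G b)" for b
  have F: "F = (\<Sum>a\<in>Poly_Mapping.keys F. sF a)" and G: "G = (\<Sum>b\<in>Poly_Mapping.keys G. sG b)"
    unfolding sF_def sG_def by (rule poly_mapping_eq_sum_single)+
  have "ev n (F * G) y = (\<Sum>a\<in>Poly_Mapping.keys F. \<Sum>b\<in>Poly_Mapping.keys G. ev n (sF a * sG b) y)"
    by (subst F, subst G) (simp add: sum_product ev_sum)
  also have "\<dots> = (\<Sum>a\<in>Poly_Mapping.keys F. ev n (sF a) y) * (\<Sum>b\<in>Poly_Mapping.keys G. ev n (sG b) y)"
    unfolding sF_def sG_def by (simp add: sum_product mult_single ev_single ev_mon_add mult_ac)
  finally show ?thesis
    using F G ev_sum[of n sF "Poly_Mapping.keys F" y] ev_sum[of n sG "Poly_Mapping.keys G" y] by metis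
qed

lemma ev_symconst [simp]: "ev n (symconst c) y = c"
  by (simp add: ev_single)

lemma ev_of_nat [simp]: "ev n (of_nat k) y = real k"
  using ev_symconst[of n "real k" y] by simp

lemma ev_pvar [simp]: "ev n (pvar k) y = psum n k y"
  by (simp add: pvar_def ev_single ev_mon_def)

lemmas ev_simps = ev_add ev_diff ev_mult ev_sum

lemma pidx_zero [simp]: "pidx 0 = {}"
  by (simp add: pidx_def)

lemma pidx_add: "pidx (F + G) \<subseteq> pidx F \<union> pidx G"
  unfolding pidx_def using keys_add[of F G] by auto

lemma pidx_sum: "pidx (\<Sum>i\<in>S. f i) \<subseteq> (\<Union>i\<in>S. pidx (f i))"
  unfolding pidx_def using keys_sum[of f S] by blast

lemma pidx_mult: "pidx (F * G) \<subseteq> pidx F \<union> pidx G"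
proof
  fix k assume "k \<in> pidx (F * G)"
  then obtain m where m: "m \<in> Poly_Mapping.keys (F * G)" "k \<in> Poly_Mapping.keys m"
    unfolding pidx_def by auto
  then obtain a b where "m = a + b" "a \<in> Poly_Mapping.keys F" "b \<in> Poly_Mapping.keys G"
    using keys_mult[of F G] by auto
  then show "k \<in> pidx F \<union> pidx G"
    using m(2) keys_add[of a b] unfolding pidx_def by auto
qed

lemma pidx_add_subset: "pidx F \<subseteq> S \<Longrightarrow> pidx G \<subseteq> S \<Longrightarrow> pidx (F + G) \<subseteq> S"
  using pidx_add[of F G] by blast

lemma pidx_mult_subset: "pidx F \<subseteq> S \<Longrightarrow> pidx G \<subseteq> S \<Longrightarrow> pidx (F * G) \<subseteq> S"
  using pidx_mult[of F G] by blast

lemma pidx_sum_subset: "(\<And>i. i \<in> A \<Longrightarrow> pidx (f i) \<subseteq> S) \<Longrightarrow> pidx (\<Sum>i\<in>A. f i) \<subseteq> S"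
  using pidx_sum[of f A] by blast

lemma pidx_single: "pidx (Poly_Mapping.single m c) \<subseteq> Poly_Mapping.keys m"
  unfolding pidx_def by auto

lemma pidx_symconst [simp]: "pidx (symconst c) = {}"
  using pidx_single[of 0 c] by auto

lemma pidx_of_nat [simp]: "pidx (of_nat k) = {}"
  using pidx_symconst[of "real k"] by simp

lemma pidx_pvar_subset: "k \<in> S \<Longrightarrow> pidx (pvar k) \<subseteq> S"
  unfolding pvar_def using pidx_single[of "pmon k" 1] by auto

lemma pidx_dp: "pidx (dp k G) \<subseteq> pidx G"
proof -
  have "pidx (dp k G) \<subseteq> (\<Union>m\<in>Poly_Mapping.keys G.
      pidx (Poly_Mapping.single (m - pmon k) (Poly_Mapping.lookup G m * real (Poly_Mapping.lookup m k))))"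
    unfolding dp_def by (rule pidx_sum)
  also have "\<dots> \<subseteq> (\<Union>m\<in>Poly_Mapping.keys G. Poly_Mapping.keys m)"
    using pidx_single by (fastforce simp: in_keys_iff lookup_minus)
  finally show ?thesis
    by (simp add: pidx_def)
qed

lemma pidx_dp_subset: "pidx G \<subseteq> S \<Longrightarrow> pidx (dp k G) \<subseteq> S"
  using pidx_dp[of k G] by blast

lemma dp_eq_0_if_notin_pidx: "k \<notin> pidx G \<Longrightarrow> dp k G = 0"
  unfolding dp_def pidx_def by (intro sum.neutral) (auto simp: in_keys_iff)

lemma dp_eq_0_if_gt_bound: "pidx G \<subseteq> {..N} \<Longrightarrow> N < k \<Longrightarrow> dp k G = 0"
  by (rule dp_eq_0_if_notin_pidx) auto

lemma pidx_subset_pbound: "pidx F \<subseteq> {..pbound F}"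
proof -
  have "finite (pidx F)"
    unfolding pidx_def by auto
  then show ?thesis
    unfolding pbound_def by auto
qed

section \<open>The chain rule through the power sums\<close>

lemma psum_fun_upd: "i < n \<Longrightarrow> psum n k (y(i := t)) = t ^ k + (\<Sum>j\<in>{..<n} - {i}. y j ^ k)"
  unfolding psum_def by (subst sum.remove[of _ i]) (auto intro!: sum.cong)

lemma has_real_derivative_psum_fun_upd:
  "i < n \<Longrightarrow> ((\<lambda>t. psum n k (y(i := t))) has_real_derivative (real k * y i ^ (k - 1))) (at (y i))"
  unfolding psum_fun_upd by (auto intro!: derivative_eq_intros)

lemma ev_mon_diff_pmon:
  assumes k: "k \<in> Poly_Mapping.keys m"
  shows "ev_mon n (m - pmon k) y = psum n k y ^ (Poly_Mapping.lookup m k - 1) *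
      (\<Prod>j\<in>Poly_Mapping.keys m - {k}. psum n j y ^ Poly_Mapping.lookup m j)"
proof -
  have "ev_mon n (m - pmon k) y = (\<Prod>j\<in>Poly_Mapping.keys m. psum n j y ^ Poly_Mapping.lookup (m - pmon k) j)"
    by (rule ev_mon_superset) (auto simp: in_keys_iff lookup_minus)
  also have "\<dots> = psum n k y ^ Poly_Mapping.lookup (m - pmon k) k *
      (\<Prod>j\<in>Poly_Mapping.keys m - {k}. psum n j y ^ Poly_Mapping.lookup (m - pmon k) j)"
    using k by (simp add: prod.remove)
  also have "\<dots> = psum n k y ^ (Poly_Mapping.lookup m k - 1) *
      (\<Prod>j\<in>Poly_Mapping.keys m - {k}. psum n j y ^ Poly_Mapping.lookup m j)"
    by (auto simp: lookup_minus lookup_single intro!: prod.cong)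
  finally show ?thesis .
qed

lemma has_real_derivative_ev_mon_fun_upd:
  assumes i: "i < n"
  shows "((\<lambda>t. ev_mon n m (y(i := t))) has_real_derivative
     (\<Sum>k\<in>Poly_Mapping.keys m. real k * y i ^ (k - 1) *
        (real (Poly_Mapping.lookup m k) * ev_mon n (m - pmon k) y))) (at (y i))"
proof -
  have "((\<lambda>t. psum n k (y(i := t)) ^ Poly_Mapping.lookup m k) has_real_derivative
      real (Poly_Mapping.lookup m k) * psum n k y ^ (Poly_Mapping.lookup m k - 1) * (real k * y i ^ (k - 1)))
      (at (y i))" for k
    using DERIV_pow[THEN DERIV_chain2, OF has_real_derivative_psum_fun_upd[OF i, of k y]] by simp
  then have "((\<lambda>t. ev_mon n m (y(i := t))) has_real_derivative
     (\<Sum>k\<in>Poly_Mapping.keys m. real (Poly_Mapping.lookup m k) * psum n k y ^ (Poly_Mapping.lookup m k - 1) *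
        (real k * y i ^ (k - 1)) * (\<Prod>j\<in>Poly_Mapping.keys m - {k}. psum n j (y(i := y i)) ^ Poly_Mapping.lookup m j)))
     (at (y i))"
    unfolding ev_mon_def by (rule has_field_derivative_prod)
  then show ?thesis
    by (rule DERIV_cong) (intro sum.cong refl, simp add: ev_mon_diff_pmon[simplified])
qed

lemma ev_dp:
  "ev n (dp k G) y = (\<Sum>m\<in>Poly_Mapping.keys G.
      Poly_Mapping.lookup G m * real (Poly_Mapping.lookup m k) * ev_mon n (m - pmon k) y)"
  unfolding dp_def by (simp add: ev_sum ev_single)

lemma has_real_derivative_ev_fun_upd:
  assumes i: "i < n" and bound: "pidx G \<subseteq> {..M}"
  shows "((\<lambda>t. ev n G (y(i := t))) has_real_derivative
     (\<Sum>k\<in>{1..M}. real k * y i ^ (k - 1) * ev n (dp k G) y)) (at (y i))"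
proof -
  let ?d = "\<lambda>m k. real k * y i ^ (k - 1) * (real (Poly_Mapping.lookup m k) * ev_mon n (m - pmon k) y)"
  have "((\<lambda>t. \<Sum>m\<in>Poly_Mapping.keys G. Poly_Mapping.lookup G m * ev_mon n m (y(i := t))) has_real_derivative
     (\<Sum>m\<in>Poly_Mapping.keys G. Poly_Mapping.lookup G m * (\<Sum>k\<in>Poly_Mapping.keys m. ?d m k))) (at (y i))"
    by (intro DERIV_sum DERIV_cmult has_real_derivative_ev_mon_fun_upd i)
  moreover have "(\<Sum>k\<in>Poly_Mapping.keys m. ?d m k) = (\<Sum>k\<in>{1..M}. ?d m k)" if m: "m \<in> Poly_Mapping.keys G" for m
  proof -
    have "k \<le> M" if "Poly_Mapping.lookup m k \<noteq> 0" for k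
      using that m bound in_keys_iff[of k m] unfolding pidx_def by blast
    then show ?thesis
      by (intro sum.mono_neutral_cong) (auto simp: in_keys_iff)
  qed
  ultimately have "((\<lambda>t. ev n G (y(i := t))) has_real_derivative
     (\<Sum>m\<in>Poly_Mapping.keys G. Poly_Mapping.lookup G m * (\<Sum>k\<in>{1..M}. ?d m k))) (at (y i))"
    unfolding ev_def ev_mon_def by simp
  also have "(\<Sum>m\<in>Poly_Mapping.keys G. Poly_Mapping.lookup G m * (\<Sum>k\<in>{1..M}. ?d m k))
      = (\<Sum>k\<in>{1..M}. real k * y i ^ (k - 1) * ev n (dp k G) y)"
    unfolding ev_dp sum_distrib_left by (subst sum.swap) (simp add: mult_ac)
  finally show ?thesis .
qed

lemma pd_ev:
  assumes "i < n" and "pidx G \<subseteq> {..M}"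
  shows "pd i (ev n G) y = (\<Sum>k\<in>{1..M}. real k * y i ^ (k - 1) * ev n (dp k G) y)"
  unfolding pd_def by (rule DERIV_imp_deriv[OF has_real_derivative_ev_fun_upd[OF assms]])

lemma pd_pd_ev:
  assumes i: "i < n" and bound: "pidx G \<subseteq> {..M}"
  shows "pd i (pd i (ev n G)) y = (\<Sum>k\<in>{1..M}.
      real k * (real (k - 1) * y i ^ (k - 1 - 1)) * ev n (dp k G) y
      + (\<Sum>l\<in>{1..M}. real l * y i ^ (l - 1) * ev n (dp l (dp k G)) y) * (real k * y i ^ (k - 1)))"
proof -
  have "((\<lambda>t. real k * t ^ (k - 1) * ev n (dp k G) (y(i := t))) has_real_derivative
      real k * (real (k - 1) * y i ^ (k - 1 - 1)) * ev n (dp k G) y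
      + (\<Sum>l\<in>{1..M}. real l * y i ^ (l - 1) * ev n (dp l (dp k G)) y) * (real k * y i ^ (k - 1))) (at (y i))"
    for k
  proof -
    have "((\<lambda>t. real k * t ^ (k - 1)) has_real_derivative real k * (real (k - 1) * y i ^ (k - 1 - 1))) (at (y i))"
      by (auto intro!: derivative_eq_intros)
    from DERIV_mult[OF this has_real_derivative_ev_fun_upd[OF i pidx_dp_subset[OF bound], of k y]]
    show ?thesis by simp
  qed
  then have "((\<lambda>t. \<Sum>k\<in>{1..M}. real k * t ^ (k - 1) * ev n (dp k G) (y(i := t))) has_real_derivative
     (\<Sum>k\<in>{1..M}. real k * (real (k - 1) * y i ^ (k - 1 - 1)) * ev n (dp k G) y
      + (\<Sum>l\<in>{1..M}. real l * y i ^ (l - 1) * ev n (dp l (dp k G)) y) * (real k * y i ^ (k - 1)))) (at (y i))"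
    by (rule DERIV_sum)
  moreover have "pd i (ev n G) (y(i := t)) = (\<Sum>k\<in>{1..M}. real k * t ^ (k - 1) * ev n (dp k G) (y(i := t)))" for t
    using pd_ev[OF i bound, of "y(i := t)"] by simp
  ultimately have "((\<lambda>t. pd i (ev n G) (y(i := t))) has_real_derivative (\<Sum>k\<in>{1..M}.
      real k * (real (k - 1) * y i ^ (k - 1 - 1)) * ev n (dp k G) y
      + (\<Sum>l\<in>{1..M}. real l * y i ^ (l - 1) * ev n (dp l (dp k G)) y) * (real k * y i ^ (k - 1)))) (at (y i))"
    by presburger
  then show ?thesis
    unfolding pd_def[of i "pd i (ev n G)"] by (rule DERIV_imp_deriv)
qed

lemma inj_on_fun_upd_off:
  assumes "inj_on x {..<n}" and "i < n" and "t \<notin> x ` ({..<n} - {i})"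
  shows "inj_on (x(i := t)) {..<n}"
  using assms unfolding inj_on_def by (auto split: if_splits)

text \<open>Distinctness of the coordinates is an open condition.\<close>
lemma pd_cong_inj_on:
  assumes inj: "inj_on x {..<n}" and i: "i < n"
    and eq: "\<And>y. inj_on y {..<n} \<Longrightarrow> f y = g y"
  shows "pd i f x = pd i g x"
  unfolding pd_def
proof (rule deriv_cong_ev)
  let ?S = "- (x ` ({..<n} - {i}))"
  have "open ?S"
    by (intro open_Compl finite_imp_closed) auto
  moreover have "x i \<in> ?S"
    using inj i by (auto simp: inj_on_def)
  moreover have "\<forall>t\<in>?S. f (x(i := t)) = g (x(i := t))"
    using inj_on_fun_upd_off[OF inj i] eq by auto
  ultimately show "\<forall>\<^sub>F t in nhds (x i). f (x(i := t)) = g (x(i := t))"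
    unfolding eventually_nhds by blast
qed simp

section \<open>The operators as differential operators in the power sums\<close>

definition E2_sym :: "nat \<Rightarrow> symfun \<Rightarrow> symfun" where
  "E2_sym M G = (\<Sum>k\<in>{1..M}. of_nat k * pvar (k + 1) * dp k G)"

definition cut_sum :: "nat \<Rightarrow> symfun" where
  "cut_sum k = (\<Sum>a\<in>{1..<k}. pvar a * pvar (k - a))"

definition LB_diag :: "real \<Rightarrow> nat \<Rightarrow> symfun \<Rightarrow> symfun" where
  "LB_diag \<alpha> M G = (\<Sum>k\<in>{1..M}. symconst ((\<alpha> - 1) / 2 * real k * real (k - 1)) * pvar k * dp k G)"

definition LB_cut :: "nat \<Rightarrow> symfun \<Rightarrow> symfun" where
  "LB_cut M G = (\<Sum>k\<in>{1..M}. symconst (real k / 2) * cut_sum k * dp k G)"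

definition LB_join :: "real \<Rightarrow> nat \<Rightarrow> symfun \<Rightarrow> symfun" where
  "LB_join \<alpha> M G = (\<Sum>k\<in>{1..M}. \<Sum>l\<in>{1..M}. symconst (\<alpha> / 2 * real k * real l) * pvar (k + l) * dp k (dp l G))"

definition LB_sym :: "real \<Rightarrow> nat \<Rightarrow> symfun \<Rightarrow> symfun" where
  "LB_sym \<alpha> M G = LB_diag \<alpha> M G + LB_cut M G + LB_join \<alpha> M G"

lemma E2_ev:
  assumes bound: "pidx G \<subseteq> {..M}"
  shows "E2 n (ev n G) y = ev n (E2_sym M G) y"
proof -
  have "E2 n (ev n G) y = (\<Sum>i<n. y i ^ 2 * (\<Sum>k\<in>{1..M}. real k * y i ^ (k - 1) * ev n (dp k G) y))"
    unfolding E2_def by (rule sum.cong) (simp_all add: pd_ev[OF _ bound])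
  also have "\<dots> = (\<Sum>i<n. \<Sum>k\<in>{1..M}. real k * y i ^ (k + 1) * ev n (dp k G) y)"
    unfolding sum_distrib_left
    by (intro sum.cong refl) (auto simp: power_add[symmetric] mult_ac simp del: power_Suc)
  also have "\<dots> = ev n (E2_sym M G) y"
    unfolding E2_sym_def
    by (subst sum.swap) (simp add: ev_simps psum_def sum_distrib_left sum_distrib_right mult_ac)
  finally show ?thesis .
qed

lemma power2_mult_pd_pd_ev:
  assumes i: "i < n" and bound: "pidx G \<subseteq> {..M}"
  shows "y i ^ 2 * pd i (pd i (ev n G)) y
     = (\<Sum>k\<in>{1..M}. real k * real (k - 1) * y i ^ k * ev n (dp k G) y
          + (\<Sum>l\<in>{1..M}. real k * real l * y i ^ (k + l) * ev n (dp k (dp l G)) y))"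
  unfolding pd_pd_ev[OF i bound] sum_distrib_left
proof (rule sum.cong[OF refl])
  fix k assume k: "k \<in> {1..M}"
  have "(\<Sum>l\<in>{1..M}. y i ^ 2 * (real l * y i ^ (l - 1) * ev n (dp l (dp k G)) y * (real k * y i ^ (k - 1))))
      = (\<Sum>l\<in>{1..M}. real k * real l * y i ^ (k + l) * ev n (dp k (dp l G)) y)"
    by (rule sum.cong[OF refl]) (subst power2_mult_deriv_power_product, use k in \<open>auto simp: dp_commute\<close>)
  then show "y i ^ 2 * (real k * (real (k - 1) * y i ^ (k - 1 - 1)) * ev n (dp k G) y
      + (\<Sum>l\<in>{1..M}. real l * y i ^ (l - 1) * ev n (dp l (dp k G)) y) * (real k * y i ^ (k - 1)))
    = real k * real (k - 1) * y i ^ k * ev n (dp k G) y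
      + (\<Sum>l\<in>{1..M}. real k * real l * y i ^ (k + l) * ev n (dp k (dp l G)) y)"
    unfolding distrib_left sum_distrib_right sum_distrib_left power2_mult_second_deriv_power
    by simp
qed

lemma sum_power2_pd_pd_ev:
  assumes bound: "pidx G \<subseteq> {..M}"
  shows "(\<Sum>i<n. y i ^ 2 * pd i (pd i (ev n G)) y)
     = (\<Sum>k\<in>{1..M}. real k * real (k - 1) * psum n k y * ev n (dp k G) y)
       + (\<Sum>k\<in>{1..M}. \<Sum>l\<in>{1..M}. real k * real l * psum n (k + l) y * ev n (dp k (dp l G)) y)"
proof -
  have "(\<Sum>i<n. y i ^ 2 * pd i (pd i (ev n G)) y)
     = (\<Sum>k\<in>{1..M}. (\<Sum>i<n. real k * real (k - 1) * y i ^ k * ev n (dp k G) y)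
          + (\<Sum>l\<in>{1..M}. \<Sum>i<n. real k * real l * y i ^ (k + l) * ev n (dp k (dp l G)) y))"
    by (simp add: power2_mult_pd_pd_ev[OF _ bound] sum.distrib sum.swap[of _ "{..<n}"])
  also have "\<dots> = (\<Sum>k\<in>{1..M}. real k * real (k - 1) * psum n k y * ev n (dp k G) y
          + (\<Sum>l\<in>{1..M}. real k * real l * psum n (k + l) y * ev n (dp k (dp l G)) y))"
    by (simp add: psum_def sum_distrib_left sum_distrib_right mult_ac)
  finally show ?thesis
    by (simp add: sum.distrib)
qed

lemma sum_offdiag_power_ratio_Suc:
  assumes inj: "inj_on y {..<n}"
  shows "(\<Sum>i<n. \<Sum>j\<in>{..<n} - {i}. y i ^ Suc k * y j / (y i - y j))
     = (\<Sum>a\<in>{1..k}. psum n a y * psum n (Suc k - a) y) / 2 - real k / 2 * psum n (Suc k) y"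
proof -
  let ?g = "\<lambda>i j. y i ^ Suc k * y j / (y i - y j)"
  let ?h = "\<lambda>i j. \<Sum>a\<in>{1..k}. y i ^ a * y j ^ (Suc k - a)"
  have "2 * (\<Sum>i<n. \<Sum>j\<in>{..<n} - {i}. ?g i j) = (\<Sum>i<n. \<Sum>j\<in>{..<n} - {i}. ?g i j + ?g j i)"
    using sum_offdiag_swap[of "{..<n}" ?g] by (simp add: sum.distrib)
  also have "\<dots> = (\<Sum>i<n. \<Sum>j\<in>{..<n} - {i}. ?h i j)"
  proof (intro sum.cong refl)
    fix i j assume "i \<in> {..<n}" "j \<in> {..<n} - {i}"
    then have "y i - y j \<noteq> 0"
      using inj by (auto simp: inj_on_def)
    have "?g j i = - (y j ^ Suc k * y i / (y i - y j))"
      by (metis minus_diff_eq minus_divide_right)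
    then have "?g i j + ?g j i = (y i ^ Suc k * y j - y j ^ Suc k * y i) / (y i - y j)"
      by (simp add: diff_divide_distrib)
    also have "\<dots> = ?h i j"
      using \<open>y i - y j \<noteq> 0\<close> unfolding power_Suc_mult_diff by simp
    finally show "?g i j + ?g j i = ?h i j" .
  qed
  also have "\<dots> = (\<Sum>i<n. \<Sum>j<n. ?h i j) - (\<Sum>i<n. ?h i i)"
    by (rule sum_offdiag_eq) simp
  also have "(\<Sum>i<n. \<Sum>j<n. ?h i j) = (\<Sum>a\<in>{1..k}. psum n a y * psum n (Suc k - a) y)"
  proof -
    have "(\<Sum>i<n. \<Sum>j<n. ?h i j) = (\<Sum>a\<in>{1..k}. \<Sum>i<n. \<Sum>j<n. y i ^ a * y j ^ (Suc k - a))"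
      by (subst sum.swap) (rule sum.cong[OF refl], rule sum.swap)
    then show ?thesis
      unfolding psum_def sum_product .
  qed
  also have "(\<Sum>i<n. ?h i i) = real k * psum n (Suc k) y"
    by (simp add: psum_def sum_distrib_left power_add[symmetric])
  finally show ?thesis by simp
qed

lemma ev_cut_sum: "ev n (cut_sum k) y = (\<Sum>a\<in>{1..<k}. psum n a y * psum n (k - a) y)"
  by (simp add: cut_sum_def ev_simps)

lemma sum_offdiag_power_ratio:
  assumes "inj_on y {..<n}" and "1 \<le> k"
  shows "(\<Sum>i<n. \<Sum>j\<in>{..<n} - {i}. y i ^ k * y j / (y i - y j))
     = ev n (cut_sum k) y / 2 - real (k - 1) / 2 * psum n k y"
proof -
  obtain j where "k = Suc j"
    using \<open>1 \<le> k\<close> by (cases k) auto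
  then show ?thesis
    using sum_offdiag_power_ratio_Suc[OF assms(1), of j]
    by (simp add: ev_cut_sum atLeastLessThanSuc_atLeastAtMost del: atLeastLessThanSuc)
qed

lemma sum_offdiag_pd_ev:
  assumes bound: "pidx G \<subseteq> {..M}" and inj: "inj_on y {..<n}"
  shows "(\<Sum>i<n. \<Sum>j\<in>{..<n} - {i}. y i * y j / (y i - y j) * pd i (ev n G) y)
     = (\<Sum>k\<in>{1..M}. real k * ev n (dp k G) y * (ev n (cut_sum k) y / 2 - real (k - 1) / 2 * psum n k y))"
proof -
  have deriv_term: "z * w / d * (real k * z ^ (k - 1) * g) = real k * g * (z ^ k * w / d)"
    if "1 \<le> k" for z w d g :: real and k
    using that by (cases k) (auto simp: field_simps)
  have "(\<Sum>i<n. \<Sum>j\<in>{..<n} - {i}. y i * y j / (y i - y j) * pd i (ev n G) y)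
      = (\<Sum>i<n. \<Sum>j\<in>{..<n} - {i}. \<Sum>k\<in>{1..M}. real k * ev n (dp k G) y * (y i ^ k * y j / (y i - y j)))"
  proof (intro sum.cong refl)
    fix i j assume "i \<in> {..<n}"
    then have "i < n" by simp
    show "y i * y j / (y i - y j) * pd i (ev n G) y
        = (\<Sum>k\<in>{1..M}. real k * ev n (dp k G) y * (y i ^ k * y j / (y i - y j)))"
      unfolding pd_ev[OF \<open>i < n\<close> bound] sum_distrib_left
      by (intro sum.cong refl) (subst deriv_term, auto)
  qed
  also have "\<dots> = (\<Sum>k\<in>{1..M}. \<Sum>i<n. \<Sum>j\<in>{..<n} - {i}. real k * ev n (dp k G) y * (y i ^ k * y j / (y i - y j)))"
    by (subst sum.swap) (rule sum.cong[OF refl], rule sum.swap)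
  also have "\<dots> = (\<Sum>k\<in>{1..M}. real k * ev n (dp k G) y * (\<Sum>i<n. \<Sum>j\<in>{..<n} - {i}. y i ^ k * y j / (y i - y j)))"
    by (simp add: sum_distrib_left)
  also have "\<dots> = (\<Sum>k\<in>{1..M}. real k * ev n (dp k G) y * (ev n (cut_sum k) y / 2 - real (k - 1) / 2 * psum n k y))"
    by (intro sum.cong refl) (simp add: sum_offdiag_power_ratio[OF inj])
  finally show ?thesis .
qed

lemma LB_ev:
  assumes bound: "pidx G \<subseteq> {..M}" and inj: "inj_on y {..<n}"
  shows "LB \<alpha> n (ev n G) y = ev n (LB_sym \<alpha> M G) y"
proof -
  have regroup: "a / 2 * (k * r * P * g) + S + k * g * (c / 2 - r / 2 * P)
      = (a - 1) / 2 * k * r * P * g + k / 2 * c * g + S" for a k r P g S c :: real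
    by (simp add: field_simps)
  have "LB \<alpha> n (ev n G) y = \<alpha> / 2 * ((\<Sum>k\<in>{1..M}. real k * real (k - 1) * psum n k y * ev n (dp k G) y)
       + (\<Sum>k\<in>{1..M}. \<Sum>l\<in>{1..M}. real k * real l * psum n (k + l) y * ev n (dp k (dp l G)) y))
     + (\<Sum>k\<in>{1..M}. real k * ev n (dp k G) y * (ev n (cut_sum k) y / 2 - real (k - 1) / 2 * psum n k y))"
    unfolding LB_def sum_power2_pd_pd_ev[OF bound] sum_offdiag_pd_ev[OF bound inj] ..
  also have "\<dots> = (\<Sum>k\<in>{1..M}. (\<alpha> - 1) / 2 * real k * real (k - 1) * psum n k y * ev n (dp k G) y)
     + (\<Sum>k\<in>{1..M}. real k / 2 * ev n (cut_sum k) y * ev n (dp k G) y)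
     + (\<Sum>k\<in>{1..M}. \<Sum>l\<in>{1..M}. \<alpha> / 2 * real k * real l * psum n (k + l) y * ev n (dp k (dp l G)) y)"
    unfolding distrib_left sum_distrib_left sum.distrib[symmetric]
    by (rule sum.cong[OF refl], subst regroup) (simp add: mult_ac)
  also have "\<dots> = ev n (LB_sym \<alpha> M G) y"
    unfolding LB_sym_def LB_diag_def LB_cut_def LB_join_def
    by (simp only: ev_add ev_mult ev_sum ev_symconst ev_pvar)
  finally show ?thesis .
qed

lemma pidx_E2_sym:
  assumes bF: "pidx F \<subseteq> {..N}" and K: "N < K"
  shows "pidx (E2_sym K F) \<subseteq> {..K}"
  unfolding E2_sym_def
proof (rule pidx_sum_subset)
  fix k assume k: "k \<in> {1..K}"
  show "pidx (of_nat k * pvar (k + 1) * dp k F) \<subseteq> {..K}"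
  proof (cases "k \<le> N")
    case True
    then show ?thesis
      using K bF by (intro pidx_mult_subset pidx_pvar_subset pidx_dp_subset) auto
  next
    case False
    then show ?thesis
      using dp_eq_0_if_gt_bound[OF bF] by simp
  qed
qed

lemma pidx_cut_sum: "pidx (cut_sum k) \<subseteq> {..k}"
  unfolding cut_sum_def by (intro pidx_sum_subset pidx_mult_subset pidx_pvar_subset) auto

lemma pidx_LB_sym:
  assumes bF: "pidx F \<subseteq> {..N}" and K: "2 * N + 1 \<le> K"
  shows "pidx (LB_sym \<alpha> K F) \<subseteq> {..K}"
  unfolding LB_sym_def LB_diag_def LB_cut_def LB_join_def
proof (intro pidx_add_subset pidx_sum_subset)
  fix k assume "k \<in> {1..K}"
  then show "pidx (symconst ((\<alpha> - 1) / 2 * real k * real (k - 1)) * pvar k * dp k F) \<subseteq> {..K}"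
    using bF K by (intro pidx_mult_subset pidx_pvar_subset pidx_dp_subset) auto
next
  fix k assume "k \<in> {1..K}"
  then show "pidx (symconst (real k / 2) * cut_sum k * dp k F) \<subseteq> {..K}"
    using bF K pidx_cut_sum[of k] by (intro pidx_mult_subset pidx_dp_subset) auto
next
  fix k l
  show "pidx (symconst (\<alpha> / 2 * real k * real l) * pvar (k + l) * dp k (dp l F)) \<subseteq> {..K}"
  proof (cases "k \<le> N \<and> l \<le> N")
    case True
    then show ?thesis
      using K bF by (intro pidx_mult_subset pidx_pvar_subset pidx_dp_subset) auto
  next
    case False
    then show ?thesis
      using dp_eq_0_if_gt_bound[OF bF] dp_eq_0_if_gt_bound[OF pidx_dp_subset[OF bF]]
      by (auto simp: not_le)
  qed
qed

lemma E2_sym_add: "E2_sym K (F + G) = E2_sym K F + E2_sym K G"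
  by (simp add: E2_sym_def dp_add sum.distrib algebra_simps)

lemma E2_sym_zero [simp]: "E2_sym K 0 = 0"
  by (simp add: E2_sym_def)

lemma E2_sym_symconst [simp]: "E2_sym K (symconst c) = 0"
  by (simp add: E2_sym_def)

lemma E2_sym_sum: "E2_sym K (\<Sum>i\<in>S. f i) = (\<Sum>i\<in>S. E2_sym K (f i))"
  by (induction S rule: infinite_finite_induct) (auto simp: E2_sym_add)

lemma E2_sym_mult: "E2_sym K (F * G) = E2_sym K F * G + F * E2_sym K G"
  by (simp add: E2_sym_def dp_mult sum.distrib sum_distrib_left sum_distrib_right algebra_simps)

lemma E2_sym_pvar: "E2_sym K (pvar a) = (if a \<in> {1..K} then of_nat a * pvar (a + 1) else 0)"
proof -
  have "E2_sym K (pvar a) = (\<Sum>k\<in>{1..K}. if k = a then of_nat k * pvar (k + 1) else 0)"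
    unfolding E2_sym_def by (intro sum.cong refl) (simp add: dp_pvar)
  then show ?thesis
    by (simp add: sum.delta')
qed

lemma dp_E2_sym:
  assumes "j \<le> K + 1"
  shows "dp j (E2_sym K G) = E2_sym K (dp j G) + of_nat (j - 1) * dp (j - 1) G"
proof -
  have "dp j (E2_sym K G) = (\<Sum>k\<in>{1..K}. of_nat k * (dp j (pvar (k + 1)) * dp k G + pvar (k + 1) * dp j (dp k G)))"
    unfolding E2_sym_def dp_sum by (intro sum.cong refl) (simp add: dp_mult algebra_simps)
  also have "\<dots> = (\<Sum>k\<in>{1..K}. if k = j - 1 \<and> 1 \<le> j then of_nat k * dp k G else 0) + E2_sym K (dp j G)"
    unfolding E2_sym_def distrib_left sum.distrib
    by (intro arg_cong2[where f="(+)"] sum.cong refl) (auto simp: dp_pvar dp_commute mult_ac)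
  also have "(\<Sum>k\<in>{1..K}. if k = j - 1 \<and> 1 \<le> j then of_nat k * dp k G else 0) = of_nat (j - 1) * dp (j - 1) G"
    using assms by (cases "2 \<le> j") (auto simp: sum.delta intro!: sum.neutral)
  finally show ?thesis
    by (simp add: add.commute)
qed

lemma E2_sym_cut_sum:
  assumes "k \<le> K"
  shows "E2_sym K (cut_sum k) = of_nat (k - 1) * cut_sum (k + 1)"
proof -
  let ?q = "\<lambda>b. pvar b * pvar (k + 1 - b)"
  have "E2_sym K (cut_sum k) = (\<Sum>a\<in>{1..<k}. of_nat a * ?q (a + 1) + of_nat (k - a) * ?q a)"
    unfolding cut_sum_def E2_sym_sum
    using assms by (intro sum.cong refl) (auto simp: E2_sym_mult E2_sym_pvar Suc_diff_le algebra_simps)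
  also have "\<dots> = (\<Sum>a\<in>{1..<k}. of_nat a * ?q (a + 1)) + (\<Sum>a\<in>{1..<k}. of_nat (k - a) * ?q a)"
    by (rule sum.distrib)
  also have "(\<Sum>a\<in>{1..<k}. of_nat a * ?q (a + 1)) = (\<Sum>b\<in>{1..k}. of_nat (b - 1) * ?q b)"
  proof (cases k)
    case (Suc j)
    have "(\<Sum>a\<in>{1..<k}. of_nat a * ?q (a + 1)) = (\<Sum>b\<in>{Suc 1..Suc j}. of_nat (b - 1) * ?q b)"
      unfolding sum.shift_bounds_cl_Suc_ivl using Suc by (intro sum.cong) auto
    also have "\<dots> = (\<Sum>b\<in>{1..k}. of_nat (b - 1) * ?q b)"
      using Suc by (intro sum.mono_neutral_left) auto
    finally show ?thesis .
  qed simp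
  also have "(\<Sum>a\<in>{1..<k}. of_nat (k - a) * ?q a) = (\<Sum>a\<in>{1..k}. of_nat (k - a) * ?q a)"
    by (rule sum.mono_neutral_left) auto
  also have "(\<Sum>b\<in>{1..k}. of_nat (b - 1) * ?q b) + \<dots> = (\<Sum>a\<in>{1..k}. of_nat (k - 1) * ?q a)"
    unfolding sum.distrib[symmetric]
  proof (rule sum.cong[OF refl])
    fix a assume "a \<in> {1..k}"
    then have "of_nat (a - 1) + of_nat (k - a) = (of_nat (k - 1) :: symfun)"
      by (simp flip: of_nat_add)
    then show "of_nat (a - 1) * ?q a + of_nat (k - a) * ?q a = of_nat (k - 1) * ?q a"
      by (simp flip: distrib_right)
  qed
  also have "\<dots> = of_nat (k - 1) * cut_sum (k + 1)"
  proof -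
    have "{1..<k + 1} = {1..k}"
      by auto
    then show ?thesis
      unfolding cut_sum_def sum_distrib_left by simp
  qed
  finally show ?thesis .
qed

lemma LB_diag_E2_sym_commutator:
  "LB_diag \<alpha> K (E2_sym K F) - E2_sym K (LB_diag \<alpha> K F) =
   (\<Sum>k\<in>{1..K}. symconst ((\<alpha> - 1) / 2 * real k * real (k - 1)) *
      (of_nat (k - 1) * pvar k * dp (k - 1) F - of_nat k * pvar (k + 1) * dp k F))"
  unfolding LB_diag_def E2_sym_sum sum_subtractf[symmetric]
  by (intro sum.cong refl) (simp add: dp_E2_sym E2_sym_mult E2_sym_pvar algebra_simps)

lemma LB_cut_E2_sym_commutator:
  "LB_cut K (E2_sym K F) - E2_sym K (LB_cut K F) =
   (\<Sum>k\<in>{1..K}. symconst (real k / 2) *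
      (of_nat (k - 1) * cut_sum k * dp (k - 1) F - of_nat (k - 1) * cut_sum (k + 1) * dp k F))"
  unfolding LB_cut_def E2_sym_sum sum_subtractf[symmetric]
  by (intro sum.cong refl) (simp add: dp_E2_sym E2_sym_mult E2_sym_cut_sum algebra_simps)

lemma LB_join_E2_sym_commutator:
  "LB_join \<alpha> K (E2_sym K F) - E2_sym K (LB_join \<alpha> K F) =
   (\<Sum>k\<in>{1..K}. \<Sum>l\<in>{1..K}. symconst (\<alpha> / 2 * real k * real l) *
      (pvar (k + l) * (of_nat (k - 1) * dp (k - 1) (dp l F) + of_nat (l - 1) * dp k (dp (l - 1) F))
       - E2_sym K (pvar (k + l)) * dp k (dp l F)))"
  unfolding LB_join_def E2_sym_sum sum_subtractf[symmetric]
  by (intro sum.cong refl) (simp add: dp_E2_sym dp_add dp_diff dp_mult E2_sym_mult algebra_simps)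

lemma LB_sym_E2_sym_commutator:
  "LB_sym \<alpha> K (E2_sym K F) - E2_sym K (LB_sym \<alpha> K F)
   = (LB_diag \<alpha> K (E2_sym K F) - E2_sym K (LB_diag \<alpha> K F))
     + (LB_cut K (E2_sym K F) - E2_sym K (LB_cut K F))
     + (LB_join \<alpha> K (E2_sym K F) - E2_sym K (LB_join \<alpha> K F))"
  unfolding LB_sym_def E2_sym_add by (simp add: algebra_simps)

lemma ev_LB_diag_commutator:
  assumes bF: "pidx F \<subseteq> {..N}" and K: "N < K"
  shows "ev n (LB_diag \<alpha> K (E2_sym K F) - E2_sym K (LB_diag \<alpha> K F)) y
     = ev n (symconst (\<alpha> - 1) * (\<Sum>i\<in>{2..N + 1}. symconst (real ((i - 1)^2)) * pvar i * dp (i - 1) F)) y"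
proof -
  let ?f = "\<lambda>k. ev n (dp k F) y" and ?P = "\<lambda>k. psum n k y"
  let ?c = "\<lambda>k. (\<alpha> - 1) / 2 * real k * real (k - 1)"
  let ?h = "\<lambda>j. ?c (j + 1) * real j * ?P (j + 1) * ?f j"
  have f0: "?f k = 0" if "N < k" for k
    using dp_eq_0_if_gt_bound[OF bF that] by simp
  have "ev n (LB_diag \<alpha> K (E2_sym K F) - E2_sym K (LB_diag \<alpha> K F)) y
      = (\<Sum>k\<in>{1..K}. ?h (k - 1)) - (\<Sum>k\<in>{1..K}. ?c k * real k * ?P (k + 1) * ?f k)"
    unfolding LB_diag_E2_sym_commutator ev_sum sum_subtractf[symmetric]
    by (intro sum.cong refl) (auto simp: ev_simps field_simps of_nat_diff)
  also have "(\<Sum>k\<in>{1..K}. ?h (k - 1)) = (\<Sum>j\<in>{1..N}. ?h j)"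
    by (rule sum_pred_index) (use K f0 in auto)
  also have "(\<Sum>k\<in>{1..K}. ?c k * real k * ?P (k + 1) * ?f k) = (\<Sum>k\<in>{1..N}. ?c k * real k * ?P (k + 1) * ?f k)"
    by (rule sum.mono_neutral_right) (use K f0 in auto)
  also have "(\<Sum>j\<in>{1..N}. ?h j) - \<dots> = (\<Sum>j\<in>{1..N}. (\<alpha> - 1) * (real (j ^ 2) * ?P (j + 1) * ?f j))"
    unfolding sum_subtractf[symmetric]
    by (intro sum.cong refl) (simp add: field_simps power2_eq_square)
  also have "\<dots> = (\<Sum>i\<in>{2..N + 1}. (\<alpha> - 1) * (real ((i - 1) ^ 2) * ?P i * ?f (i - 1)))"
    using sum.shift_bounds_cl_Suc_ivl[of "\<lambda>i. (\<alpha> - 1) * (real ((i - 1) ^ 2) * ?P i * ?f (i - 1))" 1 N]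
    by (simp add: numeral_2_eq_2)
  also have "\<dots> = ev n (symconst (\<alpha> - 1) * (\<Sum>i\<in>{2..N + 1}. symconst (real ((i - 1)^2)) * pvar i * dp (i - 1) F)) y"
    by (simp only: ev_mult ev_sum ev_symconst ev_pvar sum_distrib_left)
  finally show ?thesis .
qed

lemma ev_LB_cut_commutator:
  assumes bF: "pidx F \<subseteq> {..N}" and K: "N < K"
  shows "ev n (LB_cut K (E2_sym K F) - E2_sym K (LB_cut K F)) y
     = ev n (\<Sum>i\<in>{1..N}. \<Sum>j\<in>{1..N}. symconst (real (i + j - 1)) * pvar i * pvar j * dp (i + j - 1) F) y"
proof -
  let ?f = "\<lambda>k. ev n (dp k F) y" and ?P = "\<lambda>k. psum n k y" and ?w = "\<lambda>k. ev n (cut_sum (k + 1)) y"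
  let ?u = "\<lambda>j. real (j + 1) / 2 * real j * ?w j * ?f j"
  let ?v = "\<lambda>k. real k / 2 * real (k - 1) * ?w k * ?f k"
  have f0: "?f k = 0" if "N < k" for k
    using dp_eq_0_if_gt_bound[OF bF that] by simp
  have "ev n (LB_cut K (E2_sym K F) - E2_sym K (LB_cut K F)) y = (\<Sum>k\<in>{1..K}. ?u (k - 1)) - (\<Sum>k\<in>{1..K}. ?v k)"
    unfolding LB_cut_E2_sym_commutator ev_sum sum_subtractf[symmetric]
    by (intro sum.cong refl) (auto simp: ev_simps field_simps)
  also have "(\<Sum>k\<in>{1..K}. ?u (k - 1)) = (\<Sum>k\<in>{1..N}. ?u k)"
    by (rule sum_pred_index) (use K f0 in auto)
  also have "(\<Sum>k\<in>{1..K}. ?v k) = (\<Sum>k\<in>{1..N}. ?v k)"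
    by (rule sum.mono_neutral_right) (use K f0 in auto)
  also have "(\<Sum>k\<in>{1..N}. ?u k) - \<dots> = (\<Sum>k\<in>{1..N}. real k * ?w k * ?f k)"
    unfolding sum_subtractf[symmetric] by (intro sum.cong refl) (auto simp: field_simps)
  also have "\<dots> = (\<Sum>k\<in>{1..N}. \<Sum>i\<in>{1..k}. real (i + (k + 1 - i) - 1) * ?P i * ?P (k + 1 - i) * ?f (i + (k + 1 - i) - 1))"
    by (intro sum.cong refl)
       (simp add: ev_cut_sum atLeastLessThanSuc_atLeastAtMost sum_distrib_left sum_distrib_right mult_ac
         del: atLeastLessThanSuc)
  also have "\<dots> = (\<Sum>i\<in>{1..N}. \<Sum>j\<in>{1..N}. real (i + j - 1) * ?P i * ?P j * ?f (i + j - 1))"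
    using f0 by (intro sum_triangle_reindex) simp
  also have "\<dots> = ev n (\<Sum>i\<in>{1..N}. \<Sum>j\<in>{1..N}. symconst (real (i + j - 1)) * pvar i * pvar j * dp (i + j - 1) F) y"
    by (simp only: ev_mult ev_sum ev_symconst ev_pvar)
  finally show ?thesis .
qed

lemma ev_LB_join_commutator:
  assumes bF: "pidx F \<subseteq> {..N}" and K: "2 * N + 1 \<le> K"
  shows "ev n (LB_join \<alpha> K (E2_sym K F) - E2_sym K (LB_join \<alpha> K F)) y
     = ev n (symconst \<alpha> * (\<Sum>i\<in>{1..N}. \<Sum>j\<in>{1..N}. symconst (real (i * j)) * pvar (i + j + 1) * dp i (dp j F))) y"
proof -
  let ?P = "\<lambda>k. psum n k y" and ?ff = "\<lambda>k l. ev n (dp k (dp l F)) y"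
  let ?X3 = "\<lambda>k l. \<alpha> / 2 * real k * real l * ev n (E2_sym K (pvar (k + l))) y * ?ff k l"
  let ?h = "\<lambda>j l. \<alpha> / 2 * real (j + 1) * real l * real j * ?P (j + l + 1) * ?ff j l"
  have ff0: "?ff k l = 0" if "N < k \<or> N < l" for k l
    using that dp_eq_0_if_gt_bound[OF bF] dp_eq_0_if_gt_bound[OF pidx_dp_subset[OF bF]] by auto
  have "ev n (LB_join \<alpha> K (E2_sym K F) - E2_sym K (LB_join \<alpha> K F)) y
     = (\<Sum>k\<in>{1..K}. \<Sum>l\<in>{1..K}. ?h (k - 1) l) + (\<Sum>k\<in>{1..K}. \<Sum>l\<in>{1..K}. ?h (l - 1) k)
       - (\<Sum>k\<in>{1..K}. \<Sum>l\<in>{1..K}. ?X3 k l)"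
    unfolding LB_join_E2_sym_commutator
    by (simp only: ev_sum ev_mult ev_add ev_diff ev_symconst ev_of_nat ev_pvar
        sum.distrib[symmetric] sum_subtractf[symmetric])
       (intro sum.cong refl, auto simp: field_simps of_nat_diff dp_commute add_ac)
  also have "(\<Sum>k\<in>{1..K}. \<Sum>l\<in>{1..K}. ?h (k - 1) l) = (\<Sum>k\<in>{1..N}. \<Sum>l\<in>{1..N}. ?h k l)"
    using K ff0 by (intro sum_sum_pred_index) auto
  also have "(\<Sum>k\<in>{1..K}. \<Sum>l\<in>{1..K}. ?h (l - 1) k) = (\<Sum>k\<in>{1..N}. \<Sum>l\<in>{1..N}. ?h l k)"
    using K ff0 by (subst (1 2) sum.swap) (intro sum_sum_pred_index, auto)
  also have "(\<Sum>k\<in>{1..K}. \<Sum>l\<in>{1..K}. ?X3 k l)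
      = (\<Sum>k\<in>{1..N}. \<Sum>l\<in>{1..N}. \<alpha> / 2 * real k * real l * real (k + l) * ?P (k + l + 1) * ?ff k l)"
  proof -
    have "(\<Sum>k\<in>{1..K}. \<Sum>l\<in>{1..K}. ?X3 k l) = (\<Sum>k\<in>{1..N}. \<Sum>l\<in>{1..N}. ?X3 k l)"
      using K ff0 by (intro sum_sum_restrict) auto
    also have "\<dots> = (\<Sum>k\<in>{1..N}. \<Sum>l\<in>{1..N}. \<alpha> / 2 * real k * real l * real (k + l) * ?P (k + l + 1) * ?ff k l)"
      using K by (intro sum.cong refl) (auto simp: E2_sym_pvar ev_simps)
    finally show ?thesis .
  qed
  also have "(\<Sum>k\<in>{1..N}. \<Sum>l\<in>{1..N}. ?h k l) + (\<Sum>k\<in>{1..N}. \<Sum>l\<in>{1..N}. ?h l k)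
      - (\<Sum>k\<in>{1..N}. \<Sum>l\<in>{1..N}. \<alpha> / 2 * real k * real l * real (k + l) * ?P (k + l + 1) * ?ff k l)
      = (\<Sum>k\<in>{1..N}. \<Sum>l\<in>{1..N}. \<alpha> * (real (k * l) * ?P (k + l + 1) * ?ff k l))"
    unfolding sum.distrib[symmetric] sum_subtractf[symmetric]
    by (intro sum.cong refl) (simp add: field_simps dp_commute add.commute)
  also have "\<dots> = ev n (symconst \<alpha> * (\<Sum>i\<in>{1..N}. \<Sum>j\<in>{1..N}. symconst (real (i * j)) * pvar (i + j + 1) * dp i (dp j F))) y"
    by (simp only: ev_mult ev_sum ev_symconst ev_pvar sum_distrib_left)
  finally show ?thesis .
qed

lemma LB_E2_commutator_ev:
  assumes bF: "pidx F \<subseteq> {..N}" and K: "2 * N + 1 \<le> K" and inj: "inj_on x {..<n}"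
  shows "LB \<alpha> n (E2 n (ev n F)) x - E2 n (LB \<alpha> n (ev n F)) x
       = ev n (LB_sym \<alpha> K (E2_sym K F) - E2_sym K (LB_sym \<alpha> K F)) x"
proof -
  have bFK: "pidx F \<subseteq> {..K}"
    using bF K by auto
  have "E2 n (ev n F) = ev n (E2_sym K F)"
    using E2_ev[OF bFK] by blast
  then have "LB \<alpha> n (E2 n (ev n F)) x = ev n (LB_sym \<alpha> K (E2_sym K F)) x"
    using LB_ev[OF pidx_E2_sym[OF bF] inj] K by simp
  moreover have "E2 n (LB \<alpha> n (ev n F)) x = E2 n (ev n (LB_sym \<alpha> K F)) x"
    unfolding E2_def using LB_ev[OF bFK]
    by (intro sum.cong refl arg_cong2[where f = "(*)"] pd_cong_inj_on[OF inj]) auto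
  moreover have "\<dots> = ev n (E2_sym K (LB_sym \<alpha> K F)) x"
    by (rule E2_ev[OF pidx_LB_sym[OF bF K]])
  ultimately show ?thesis
    by (simp add: ev_diff)
qed

theorem mainTheorem8:
  fixes \<alpha> :: real and n :: nat and F :: symfun and x :: "nat \<Rightarrow> real"
  assumes "is_symfun F"
    and "inj_on x {..<n}"
  shows "LB \<alpha> n (E2 n (ev n F)) x - E2 n (LB \<alpha> n (ev n F)) x = ev n (rhs_op \<alpha> F) x"
proof -
  define N where "N = pbound F"
  define K where "K = 2 * N + 1"
  have bF: "pidx F \<subseteq> {..N}"
    unfolding N_def by (rule pidx_subset_pbound)
  have "N < K" and K: "2 * N + 1 \<le> K"
    unfolding K_def by auto
  have "LB \<alpha> n (E2 n (ev n F)) x - E2 n (LB \<alpha> n (ev n F)) x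
      = ev n (LB_sym \<alpha> K (E2_sym K F) - E2_sym K (LB_sym \<alpha> K F)) x"
    by (rule LB_E2_commutator_ev[OF bF K assms(2)])
  also have "\<dots> = ev n (rhs_op \<alpha> F) x"
    unfolding LB_sym_E2_sym_commutator ev_add rhs_op_def N_def[symmetric]
      ev_LB_diag_commutator[OF bF \<open>N < K\<close>] ev_LB_cut_commutator[OF bF \<open>N < K\<close>]
      ev_LB_join_commutator[OF bF K] ..
  finally show ?thesis .
qed

end
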